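(* Let $I$ be a connected and locally connected topological space and $h:I\to\mathbb{R}$ a positive continuous function attaining its lower bound at $v\in I$. (i) If $y\in I$, $\lambda\le h(y)$, $z\in C_{y,\lambda}$ and $h(z)>\lambda$, then $z$ lies in the interior of $C_{y,\lambda}$. (ii) If $x,x'\in I$, $\lambda\le h(x)$, $\lambda'\le h(x')$, $C_{x',\lambda'}\subset C_{x,\lambda}$ and $\lambda'>\lambda$, then $C_{x,\lambda}$ is a neighbourhood of $C_{x',\lambda'}$.
   Context: For $x\in I$ and $\lambda\le h(x)$, $C_{x,\lambda}$ denotes the maximal connected subset of $\{y\in I: h(y)\ge\lambda\}$ containing $x$. *)

theory Defs
  imports "HOL-Analysis.Analysis"
begin

definition levelComp :: "'a topology \<Rightarrow> ('a \<Rightarrow> real) \<Rightarrow> 'a \<Rightarrow> real \<Rightarrow> 'a set" where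
  "levelComp X h x lam =
     connected_component_of_set (subtopology X {y \<in> topspace X. h y \<ge> lam}) x"

end

theory Submission
  imports Defs
begin

lemma levelComp_subset_superlevel:
  "levelComp X h y lam \<subseteq> {w \<in> topspace X. h w \<ge> lam}"
  using connected_component_of_subset_topspace[of "subtopology X {w \<in> topspace X. h w \<ge> lam}" y]
  by (auto simp: levelComp_def)

text \<open>A connected open neighbourhood of z inside the strict superlevel set h > lam
  lies in the superlevel set and meets the component, hence is contained in it.\<close>

lemma in_interior_levelComp:
  assumes "locally_connected_space X" and "continuous_map X euclideanreal h"
    and z: "z \<in> levelComp X h y lam" and "h z > lam"
  shows "z \<in> X interior_of levelComp X h y lam"
proof -
  define S where "S = {w \<in> topspace X. h w \<ge> lam}"
  have open_strict: "openin X {w \<in> topspace X. h w \<in> {lam<..}}"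
    using assms(2) by (rule openin_continuous_map_preimage) auto
  have zX: "z \<in> topspace X"
    using z levelComp_subset_superlevel[of X h y lam] by blast
  obtain V where V: "openin X V" "connectedin X V" "z \<in> V"
      "V \<subseteq> {w \<in> topspace X. h w \<in> {lam<..}}"
    using assms(1) open_strict zX \<open>h z > lam\<close> unfolding locally_connected_space
    by (metis (no_types, lifting) greaterThan_iff mem_Collect_eq)
  have "connectedin (subtopology X S) V"
    using V(2,4) by (auto simp: connectedin_subtopology S_def)
  then have "V \<subseteq> connected_component_of_set (subtopology X S) z"
    using V(3) by (rule connected_component_of_maximal)
  also have "\<dots> = connected_component_of_set (subtopology X S) y"
    using z connected_component_of_equiv[of "subtopology X S" y z] by (simp add: levelComp_def S_def)
  finally have "V \<subseteq> levelComp X h y lam"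
    by (simp add: levelComp_def S_def)
  then show ?thesis
    using V(1,3) interior_of_maximal by blast
qed

lemma levelComp_subset_interior_levelComp:
  assumes "locally_connected_space X" and "continuous_map X euclideanreal h"
    and sub: "levelComp X h x' lam' \<subseteq> levelComp X h x lam" and "lam < lam'"
  shows "levelComp X h x' lam' \<subseteq> X interior_of levelComp X h x lam"
proof
  fix z assume z: "z \<in> levelComp X h x' lam'"
  then have "h z > lam"
    using levelComp_subset_superlevel[of X h x' lam'] \<open>lam < lam'\<close> by force
  then show "z \<in> X interior_of levelComp X h x lam"
    using in_interior_levelComp[OF assms(1,2)] z sub by blast
qed

theorem mainTheorem6:
  fixes X :: "'a topology" and h :: "'a \<Rightarrow> real" and v :: 'a
  assumes "connected_space X" and "locally_connected_space X"
    and "continuous_map X euclideanreal h"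
    and "\<forall>x\<in>topspace X. h x > 0"
    and "v \<in> topspace X" and "\<forall>x\<in>topspace X. h v \<le> h x"
  shows "(\<forall>y z lam. y \<in> topspace X \<and> lam \<le> h y \<and> z \<in> levelComp X h y lam \<and> h z > lam
            \<longrightarrow> z \<in> X interior_of (levelComp X h y lam))
       \<and> (\<forall>x x' lam lam'. x \<in> topspace X \<and> x' \<in> topspace X \<and> lam \<le> h x \<and> lam' \<le> h x'
            \<and> levelComp X h x' lam' \<subseteq> levelComp X h x lam \<and> lam' > lam
            \<longrightarrow> levelComp X h x' lam' \<subseteq> X interior_of (levelComp X h x lam))"
  using in_interior_levelComp[OF assms(2,3)] levelComp_subset_interior_levelComp[OF assms(2,3)]
  by blast

end
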